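(* Let $M$ be a closed, oriented, triangulated surface and let $C\subset M$ be a simple closed curve which is a subcomplex of $M$ and separates $M$ into two compact subsurfaces $A_1$ and $A_2$ (subcomplexes) with $A_1\cap A_2=C$, where $A_1$ is homeomorphic to a closed oriented surface $M_1$ of genus $g_1$ with an open disk removed and $A_2$ is homeomorphic to a closed oriented surface $M_2$ of genus $g_2$ with an open disk removed (so $M=M_1\#_C M_2$). Let $f$ be a perfect discrete Morse function on $M$ with gradient vector field $V$ such that the critical vertex and exactly $2g_1$ of the critical edges of $f$ lie in $A_1$, and the critical $2$-cell and the remaining $2g_2$ critical edges lie in $A_2\setminus C$. Assume further that no arrow on $C$ points into $A_2$, i.e. every vertex and edge of $C$ is paired by $V$ either with a cell of $C$ or with a cell of $A_1$ not in $C$. Let $D_1$ and $D_2$ be disks triangulated as cones over $C$, so that $A_1\cup_C D_1\cong M_1$ and $A_2\cup_C D_2\cong M_2$. Then there exist perfect discrete Morse functions $f_1$ on $A_1\cup_C D_1$ and $f_2$ on $A_2\cup_C D_2$ such that $f_1$ agrees with $f$ on $A_1$, $f_2$ agrees with $f$ on $A_2$, and the gradient vector field of $f_i$ extends the restriction of $V$ to the pairs with both cells in $A_i$ ($i=1,2$).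
   Context: A discrete Morse function on a finite regular cell complex $K$ is a function $f$ from the set of cells to $\mathbb R$ such that for every $p$-cell $\sigma$, at most one $(p+1)$-coface $\tau$ satisfies $f(\tau)\le f(\sigma)$ and at most one $(p-1)$-face $\nu$ satisfies $f(\nu)\ge f(\sigma)$; a cell is critical if neither exception occurs. Its gradient vector field $V$ is the set of pairs $(\sigma,\tau)$ ("arrows" from $\sigma$ to $\tau$), $\sigma$ a codimension-one face of $\tau$, with $f(\sigma)\ge f(\tau)$; each cell lies in at most one pair and the critical cells are those in no pair. $f$ is perfect if the number of critical $p$-cells equals $\operatorname{rank}H_p(K)$ for every $p$; for a closed oriented surface of genus $g$ this means one critical vertex, $2g$ critical edges and one critical $2$-cell. *)

theory Defs
  imports Complex_Main
begin

definition simplicial_complex :: "'a set set \<Rightarrow> bool" where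
  "simplicial_complex K \<longleftrightarrow> finite K \<and>
     (\<forall>\<sigma>\<in>K. finite \<sigma> \<and> \<sigma> \<noteq> {}) \<and>
     (\<forall>\<sigma>\<in>K. \<forall>\<tau>. \<tau> \<subseteq> \<sigma> \<and> \<tau> \<noteq> {} \<longrightarrow> \<tau> \<in> K)"

definition cells :: "'a set set \<Rightarrow> nat \<Rightarrow> 'a set set" where
  "cells K p = {\<sigma>\<in>K. card \<sigma> = Suc p}"

definition verts :: "'a set set \<Rightarrow> 'a set" where
  "verts K = \<Union>K"

definition facet :: "'a set \<Rightarrow> 'a set \<Rightarrow> bool" where
  "facet \<sigma> \<tau> \<longleftrightarrow> \<sigma> \<subseteq> \<tau> \<and> card \<tau> = Suc (card \<sigma>)"

definition connected_cx :: "'a set set \<Rightarrow> bool" where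
  "connected_cx K \<longleftrightarrow>
     (\<forall>u\<in>verts K. \<forall>v\<in>verts K. (\<lambda>x y. {x, y} \<in> K)\<^sup>*\<^sup>* u v)"

text \<open>Link of a vertex v is a connected graph (together with the edge condition
below, a single cycle, so the star of v is a disk).\<close>
definition link_connected :: "'a set set \<Rightarrow> 'a \<Rightarrow> bool" where
  "link_connected K v \<longleftrightarrow>
     (\<forall>x y. {v, x} \<in> K \<and> {v, y} \<in> K \<and> x \<noteq> v \<and> y \<noteq> v \<longrightarrow>
        (\<lambda>a b. {v, a, b} \<in> cells K 2)\<^sup>*\<^sup>* x y)"

text \<open>Orientation: each triangle gets a cyclic order (successor map, a 3-cycle on
its vertices), and two triangles sharing an edge induce opposite directions on it.\<close>
definition orientable_surface :: "'a set set \<Rightarrow> bool" where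
  "orientable_surface K \<longleftrightarrow> (\<exists>nx :: 'a set \<Rightarrow> 'a \<Rightarrow> 'a.
     (\<forall>t\<in>cells K 2. \<forall>u\<in>t. nx t u \<in> t \<and> nx t u \<noteq> u \<and> nx t (nx t (nx t u)) = u) \<and>
     (\<forall>t\<in>cells K 2. \<forall>t'\<in>cells K 2. t \<noteq> t' \<longrightarrow>
        (\<forall>u v. u \<in> t \<inter> t' \<and> v \<in> t \<inter> t' \<and> nx t u = v \<longrightarrow> nx t' v = u)))"

definition closed_oriented_surface :: "'a set set \<Rightarrow> bool" where
  "closed_oriented_surface K \<longleftrightarrow>
     simplicial_complex K \<and> K \<noteq> {} \<and>
     (\<forall>\<sigma>\<in>K. \<exists>t\<in>cells K 2. \<sigma> \<subseteq> t) \<and>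
     (\<forall>\<sigma>\<in>K. card \<sigma> \<le> 3) \<and>
     (\<forall>e\<in>cells K 1. card {t\<in>cells K 2. e \<subseteq> t} = 2) \<and>
     (\<forall>v\<in>verts K. link_connected K v) \<and>
     connected_cx K \<and>
     orientable_surface K"

definition euler_char :: "'a set set \<Rightarrow> int" where
  "euler_char K = (\<Sum>\<sigma>\<in>K. (-1::int) ^ (card \<sigma> - 1))"

text \<open>Genus of a closed oriented (connected) surface: \<chi> = 2 - 2g.\<close>
definition genus :: "'a set set \<Rightarrow> nat" where
  "genus K = nat ((2 - euler_char K) div 2)"

definition simple_closed_curve :: "'a set set \<Rightarrow> bool" where
  "simple_closed_curve C \<longleftrightarrow> simplicial_complex C \<and> C \<noteq> {} \<and>
     (\<forall>\<sigma>\<in>C. card \<sigma> \<le> 2) \<and>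
     (\<forall>v\<in>verts C. card {e\<in>cells C 1. v \<in> e} = 2) \<and>
     connected_cx C"

definition cone :: "'a \<Rightarrow> 'a set set \<Rightarrow> 'a set set" where
  "cone a C = C \<union> {insert a \<sigma> | \<sigma>. \<sigma> \<in> C} \<union> {{a}}"

definition discrete_morse :: "'a set set \<Rightarrow> ('a set \<Rightarrow> real) \<Rightarrow> bool" where
  "discrete_morse K f \<longleftrightarrow> (\<forall>\<sigma>\<in>K.
      card {\<tau>\<in>K. facet \<sigma> \<tau> \<and> f \<tau> \<le> f \<sigma>} \<le> 1 \<and>
      card {\<nu>\<in>K. facet \<nu> \<sigma> \<and> f \<nu> \<ge> f \<sigma>} \<le> 1)"

definition critical :: "'a set set \<Rightarrow> ('a set \<Rightarrow> real) \<Rightarrow> 'a set \<Rightarrow> bool" where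
  "critical K f \<sigma> \<longleftrightarrow> \<sigma> \<in> K \<and>
      (\<forall>\<tau>\<in>K. facet \<sigma> \<tau> \<longrightarrow> f \<tau> > f \<sigma>) \<and>
      (\<forall>\<nu>\<in>K. facet \<nu> \<sigma> \<longrightarrow> f \<nu> < f \<sigma>)"

definition crit_cells :: "'a set set \<Rightarrow> ('a set \<Rightarrow> real) \<Rightarrow> nat \<Rightarrow> 'a set set" where
  "crit_cells K f p = {\<sigma>\<in>cells K p. critical K f \<sigma>}"

definition gradient :: "'a set set \<Rightarrow> ('a set \<Rightarrow> real) \<Rightarrow> ('a set \<times> 'a set) set" where
  "gradient K f = {(\<sigma>, \<tau>). \<sigma> \<in> K \<and> \<tau> \<in> K \<and> facet \<sigma> \<tau> \<and> f \<sigma> \<ge> f \<tau>}"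

definition perfect_surface_dmf :: "'a set set \<Rightarrow> ('a set \<Rightarrow> real) \<Rightarrow> bool" where
  "perfect_surface_dmf K f \<longleftrightarrow> discrete_morse K f \<and>
      card (crit_cells K f 0) = 1 \<and>
      card (crit_cells K f 1) = 2 * genus K \<and>
      card (crit_cells K f 2) = 1"

end

theory Submission
  imports Defs
begin

text \<open>
  Cap each side with a cone over \<open>C\<close> and extend \<open>f\<close> over the cone.

  Over \<open>A\<^sub>1\<close> all cone cells get values above \<open>f\<close>, so the cone carries a Morse function of
  its own: a spanning tree of the cycle \<open>C\<close> rooted at a vertex pairs off everything except the
  triangle over the one edge missing from the tree. As no arrow of \<open>f\<close> leaves \<open>A\<^sub>1\<close> through
  \<open>C\<close>, the critical cells in \<open>A\<^sub>1\<close> do not change; that triangle takes the place of the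
  critical 2-cell in \<open>A\<^sub>2\<close>.

  Over \<open>A\<^sub>2\<close> the cone copies \<open>f\<close>: pairs inside \<open>C\<close> are copied to pairs of cones, and a cell
  of \<open>C\<close> whose partner lies in \<open>A\<^sub>1\<close> is paired with its own cone. Only the apex, placed
  below everything, becomes critical and takes the place of the critical vertex in \<open>A\<^sub>1\<close>.
\<close>

section \<open>Discrete Morse functions through their gradient\<close>

lemma simplicial_complex_finite: "simplicial_complex K \<Longrightarrow> finite K"
  unfolding simplicial_complex_def by blast

lemma simplicial_complex_cell: "simplicial_complex K \<Longrightarrow> \<sigma> \<in> K \<Longrightarrow> finite \<sigma> \<and> \<sigma> \<noteq> {}"
  unfolding simplicial_complex_def by blast

lemma simplicial_complex_face:
  "simplicial_complex K \<Longrightarrow> \<sigma> \<in> K \<Longrightarrow> \<tau> \<subseteq> \<sigma> \<Longrightarrow> \<tau> \<noteq> {} \<Longrightarrow> \<tau> \<in> K"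
  unfolding simplicial_complex_def by blast

lemma in_gradient_iff: "(\<sigma>, \<tau>) \<in> gradient K f \<longleftrightarrow> \<sigma> \<in> K \<and> \<tau> \<in> K \<and> facet \<sigma> \<tau> \<and> f \<tau> \<le> f \<sigma>"
  unfolding gradient_def by simp

lemma critical_iff_unpaired:
  "critical K f \<sigma> \<longleftrightarrow> \<sigma> \<in> K \<and> (\<forall>\<tau>. (\<sigma>, \<tau>) \<notin> gradient K f) \<and> (\<forall>\<nu>. (\<nu>, \<sigma>) \<notin> gradient K f)"
  unfolding critical_def gradient_def by (auto simp: not_le)

lemma discrete_morse_iff_single_valued:
  assumes "finite K"
  shows "discrete_morse K f \<longleftrightarrow> single_valued (gradient K f) \<and> single_valued ((gradient K f)\<inverse>)"
proof -
  let ?G = "gradient K f"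
  have "{\<tau>\<in>K. facet \<sigma> \<tau> \<and> f \<tau> \<le> f \<sigma>} = {\<tau>. (\<sigma>, \<tau>) \<in> ?G}"
    "{\<nu>\<in>K. facet \<nu> \<sigma> \<and> f \<nu> \<ge> f \<sigma>} = {\<nu>. (\<nu>, \<sigma>) \<in> ?G}" if "\<sigma> \<in> K" for \<sigma>
    using that unfolding gradient_def by auto
  moreover have "finite {\<tau>. (\<sigma>, \<tau>) \<in> ?G}" "finite {\<nu>. (\<nu>, \<sigma>) \<in> ?G}" for \<sigma>
    using assms by (auto simp: gradient_def intro: rev_finite_subset)
  ultimately have "discrete_morse K f \<longleftrightarrow>
      (\<forall>\<sigma>\<in>K. (\<forall>\<tau>\<in>{\<tau>. (\<sigma>, \<tau>) \<in> ?G}. \<forall>\<tau>'\<in>{\<tau>. (\<sigma>, \<tau>) \<in> ?G}. \<tau> = \<tau>') \<and>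
                (\<forall>\<nu>\<in>{\<nu>. (\<nu>, \<sigma>) \<in> ?G}. \<forall>\<nu>'\<in>{\<nu>. (\<nu>, \<sigma>) \<in> ?G}. \<nu> = \<nu>'))"
    unfolding discrete_morse_def by (simp add: card_le_Suc0_iff_eq cong: conj_cong)
  also have "\<dots> \<longleftrightarrow> single_valued ?G \<and> single_valued (?G\<inverse>)"
    unfolding single_valued_def converse_iff by (simp add: gradient_def) blast
  finally show ?thesis .
qed

lemma gradient_mono: "A \<subseteq> M \<Longrightarrow> gradient A f \<subseteq> gradient M f"
  unfolding gradient_def by auto

lemma gradient_agree_subset:
  assumes "A \<subseteq> K" "\<forall>\<sigma>\<in>A. h \<sigma> = f \<sigma>"
  shows "{(\<sigma>, \<tau>) \<in> gradient M f. \<sigma> \<in> A \<and> \<tau> \<in> A} \<subseteq> gradient K h"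
  using assms unfolding gradient_def by auto

lemma discrete_morse_subcomplex:
  assumes "discrete_morse M f" "A \<subseteq> M" "finite M"
  shows "discrete_morse A f"
  using assms gradient_mono[OF assms(2)] discrete_morse_iff_single_valued[of A]
    discrete_morse_iff_single_valued[of M]
  by (meson converse_mono finite_subset single_valued_subset)

lemma critical_subcomplex_iff:
  assumes "simplicial_complex M" "simplicial_complex A" "A \<subseteq> M" "\<sigma> \<in> A"
    and "\<forall>\<tau>\<in>M - A. facet \<sigma> \<tau> \<longrightarrow> f \<sigma> < f \<tau>"
  shows "critical A f \<sigma> \<longleftrightarrow> critical M f \<sigma>"
proof -
  have "\<nu> \<in> A" if "\<nu> \<in> M" "facet \<nu> \<sigma>" for \<nu>
    using simplicial_complex_face[OF assms(2,4)] simplicial_complex_cell[OF assms(1) that(1)] that(2)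
    unfolding facet_def by blast
  then show ?thesis using assms(3-5) unfolding critical_def by blast
qed

lemma single_valued_apex_union:
  assumes "single_valued R" "single_valued S"
    and "\<And>x y. (x, y) \<in> R \<Longrightarrow> a \<notin> x" "\<And>x y. (x, y) \<in> S \<Longrightarrow> a \<notin> x"
    and G: "\<And>x y. (x, y) \<in> G \<Longrightarrow> (x, y) \<in> R \<or> (\<exists>\<nu> \<rho>. x = insert a \<nu> \<and> y = insert a \<rho> \<and> (\<nu>, \<rho>) \<in> S)"
  shows "single_valued G"
proof (rule single_valuedI)
  fix x y y' assume "(x, y) \<in> G" "(x, y') \<in> G"
  from G[OF this(1)] G[OF this(2)] show "y = y'"
  proof (elim disjE exE conjE)
    fix \<nu> \<rho> \<nu>' \<rho>'
    assume "x = insert a \<nu>" "y = insert a \<rho>" "(\<nu>, \<rho>) \<in> S"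
      "x = insert a \<nu>'" "y' = insert a \<rho>'" "(\<nu>', \<rho>') \<in> S"
    moreover from this have "\<nu> = \<nu>'" using assms(4) by (metis Diff_insert_absorb)
    ultimately show "y = y'" using assms(2) single_valuedD by metis
  next
    assume "(x, y) \<in> R" "(x, y') \<in> R"
    then show "y = y'" using assms(1) single_valuedD by metis
  qed (use assms(3) in blast)+
qed

section \<open>Extending a Morse function over a cone\<close>

lemma facet_insert_self: "a \<notin> \<rho> \<Longrightarrow> finite \<rho> \<Longrightarrow> facet \<rho> (insert a \<rho>)"
  unfolding facet_def by auto

lemma facet_insert_insert_iff:
  assumes "a \<notin> \<mu>" "a \<notin> \<rho>" "finite \<mu>" "finite \<rho>"
  shows "facet (insert a \<mu>) (insert a \<rho>) \<longleftrightarrow> facet \<mu> \<rho>"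
proof -
  have "insert a \<mu> \<subseteq> insert a \<rho> \<longleftrightarrow> \<mu> \<subseteq> \<rho>" using assms by blast
  then show ?thesis using assms unfolding facet_def by simp
qed

lemma facet_of_insert:
  assumes "facet \<nu> (insert a \<rho>)" "a \<notin> \<rho>" "finite \<rho>"
  shows "\<nu> = \<rho> \<or> (\<exists>\<mu>. \<nu> = insert a \<mu> \<and> a \<notin> \<mu> \<and> facet \<mu> \<rho>)"
proof (cases "a \<in> \<nu>")
  case False
  then have "\<nu> \<subseteq> \<rho>" using assms(1) unfolding facet_def by blast
  moreover have "card \<nu> = card \<rho>" using assms unfolding facet_def by simp
  ultimately show ?thesis using assms(3) card_subset_eq by blast
next
  case True
  have "finite \<nu>" using assms(1,3) finite_subset unfolding facet_def by blast
  then have "card \<nu> = Suc (card (\<nu> - {a}))" using card_Suc_Diff1 True by metis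
  then have "facet (\<nu> - {a}) \<rho>" using assms unfolding facet_def by auto
  then show ?thesis using True by (metis Diff_iff insert_Diff singletonI)
qed

text \<open>With the empty face added, the cone over \<open>C\<close> is the image of \<open>insert a\<close>; the apex is
  \<open>insert a {}\<close>.\<close>

abbreviation augmented :: "'a set set \<Rightarrow> 'a set set" where
  "augmented C \<equiv> insert {} C"

definition cone_extend :: "'a \<Rightarrow> ('a set \<Rightarrow> real) \<Rightarrow> ('a set \<Rightarrow> real) \<Rightarrow> 'a set \<Rightarrow> real" where
  "cone_extend a f \<phi> \<sigma> = (if a \<in> \<sigma> then \<phi> (\<sigma> - {a}) else f \<sigma>)"

locale cone_over =
  fixes A C :: "'a set set" and a :: 'a
  assumes complex_A: "simplicial_complex A" and complex_C: "simplicial_complex C"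
    and C_sub_A: "C \<subseteq> A" and apex_fresh: "a \<notin> verts A"
begin

abbreviation capped :: "'a set set" where
  "capped \<equiv> A \<union> cone a C"

lemma cell_A: "\<sigma> \<in> A \<Longrightarrow> finite \<sigma> \<and> \<sigma> \<noteq> {} \<and> a \<notin> \<sigma>"
  using simplicial_complex_cell[OF complex_A] apex_fresh unfolding verts_def by blast

lemma cell_augmented: "\<rho> \<in> augmented C \<Longrightarrow> finite \<rho> \<and> a \<notin> \<rho>"
  using cell_A C_sub_A by auto

lemma insert_apex_inj: "insert a \<nu> = insert a \<rho> \<Longrightarrow> \<nu> \<in> augmented C \<Longrightarrow> \<rho> \<in> augmented C \<Longrightarrow> \<nu> = \<rho>"
  using cell_augmented insert_ident by metis

lemma capped_eq: "capped = A \<union> insert a ` augmented C"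
  unfolding cone_def using C_sub_A by auto

lemma finite_capped: "finite capped"
  unfolding capped_eq using simplicial_complex_finite complex_A complex_C by blast

lemma cone_extend_A: "\<sigma> \<in> A \<Longrightarrow> cone_extend a f \<phi> \<sigma> = f \<sigma>"
  using cell_A unfolding cone_extend_def by simp

lemma cone_extend_apex: "\<rho> \<in> augmented C \<Longrightarrow> cone_extend a f \<phi> (insert a \<rho>) = \<phi> \<rho>"
  using cell_augmented unfolding cone_extend_def by (simp add: Diff_insert_absorb)

lemma in_capped_iff: "\<sigma> \<in> capped \<longleftrightarrow> \<sigma> \<in> A \<or> (\<exists>\<nu>\<in>augmented C. \<sigma> = insert a \<nu>)"
  unfolding capped_eq by blast

lemma facet_capped_iff:
  "\<sigma> \<in> capped \<and> \<tau> \<in> capped \<and> facet \<sigma> \<tau> \<longleftrightarrow>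
     \<sigma> \<in> A \<and> \<tau> \<in> A \<and> facet \<sigma> \<tau> \<or> \<sigma> \<in> C \<and> \<tau> = insert a \<sigma> \<or>
     (\<exists>\<nu>\<in>augmented C. \<exists>\<rho>\<in>augmented C. \<sigma> = insert a \<nu> \<and> \<tau> = insert a \<rho> \<and> facet \<nu> \<rho>)"
  (is "?lhs \<longleftrightarrow> ?rhs")
proof
  assume ?lhs
  then have facet: "facet \<sigma> \<tau>" and \<sigma>: "\<sigma> \<in> A \<or> (\<exists>\<nu>\<in>augmented C. \<sigma> = insert a \<nu>)"
    and \<tau>: "\<tau> \<in> A \<or> (\<exists>\<rho>\<in>augmented C. \<tau> = insert a \<rho>)"
    unfolding in_capped_iff by blast+
  show ?rhs
  proof (cases "\<sigma> \<in> A")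
    case True
    show ?thesis
    proof (cases "\<tau> \<in> A")
      case False
      then obtain \<rho> where \<rho>: "\<rho> \<in> augmented C" "\<tau> = insert a \<rho>" using \<tau> by blast
      have "\<sigma> = \<rho>"
        using facet_of_insert[of \<sigma> a \<rho>] facet \<rho> cell_augmented[OF \<rho>(1)] cell_A[OF True] by blast
      then show ?thesis using \<rho> cell_A[OF True] by blast
    qed (use facet True in blast)
  next
    case False
    then obtain \<nu> where \<nu>: "\<nu> \<in> augmented C" "\<sigma> = insert a \<nu>" using \<sigma> by blast
    then have "\<tau> \<notin> A" using facet cell_A unfolding facet_def by blast
    then obtain \<rho> where \<rho>: "\<rho> \<in> augmented C" "\<tau> = insert a \<rho>" using \<tau> by blast
    have "facet \<nu> \<rho>"
      using facet \<nu> \<rho> facet_insert_insert_iff cell_augmented[OF \<nu>(1)] cell_augmented[OF \<rho>(1)] by metis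
    then show ?thesis using \<nu> \<rho> by blast
  qed
next
  assume ?rhs
  then show ?lhs
  proof (elim disjE)
    assume "\<sigma> \<in> C \<and> \<tau> = insert a \<sigma>"
    then show ?lhs
      using C_sub_A cell_A facet_insert_self[of a \<sigma>] unfolding in_capped_iff by blast
  next
    assume "\<exists>\<nu>\<in>augmented C. \<exists>\<rho>\<in>augmented C. \<sigma> = insert a \<nu> \<and> \<tau> = insert a \<rho> \<and> facet \<nu> \<rho>"
    then obtain \<nu> \<rho> where "\<nu> \<in> augmented C" "\<rho> \<in> augmented C" "\<sigma> = insert a \<nu>" "\<tau> = insert a \<rho>" "facet \<nu> \<rho>"
      by blast
    then show ?lhs
      using facet_insert_insert_iff cell_augmented unfolding in_capped_iff by metis
  qed (simp add: in_capped_iff)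
qed

lemma gradient_cone_extend_iff:
  "(\<sigma>, \<tau>) \<in> gradient capped (cone_extend a f \<phi>) \<longleftrightarrow>
     (\<sigma>, \<tau>) \<in> gradient A f \<or> \<sigma> \<in> C \<and> \<tau> = insert a \<sigma> \<and> \<phi> \<sigma> \<le> f \<sigma> \<or>
     (\<exists>\<nu> \<rho>. \<sigma> = insert a \<nu> \<and> \<tau> = insert a \<rho> \<and> (\<nu>, \<rho>) \<in> gradient (augmented C) \<phi>)"
proof -
  let ?h = "cone_extend a f \<phi>"
  have "(\<sigma>, \<tau>) \<in> gradient capped ?h \<longleftrightarrow>
      \<sigma> \<in> A \<and> \<tau> \<in> A \<and> facet \<sigma> \<tau> \<and> ?h \<tau> \<le> ?h \<sigma> \<or>
      \<sigma> \<in> C \<and> \<tau> = insert a \<sigma> \<and> ?h \<tau> \<le> ?h \<sigma> \<or>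
      (\<exists>\<nu>\<in>augmented C. \<exists>\<rho>\<in>augmented C. \<sigma> = insert a \<nu> \<and> \<tau> = insert a \<rho> \<and> facet \<nu> \<rho> \<and> ?h \<tau> \<le> ?h \<sigma>)"
    using facet_capped_iff[of \<sigma> \<tau>] unfolding in_gradient_iff by blast
  moreover have "\<sigma> \<in> A \<and> \<tau> \<in> A \<and> facet \<sigma> \<tau> \<and> ?h \<tau> \<le> ?h \<sigma> \<longleftrightarrow> (\<sigma>, \<tau>) \<in> gradient A f"
    unfolding in_gradient_iff by (auto simp: cone_extend_A)
  moreover have "\<sigma> \<in> C \<and> \<tau> = insert a \<sigma> \<and> ?h \<tau> \<le> ?h \<sigma> \<longleftrightarrow> \<sigma> \<in> C \<and> \<tau> = insert a \<sigma> \<and> \<phi> \<sigma> \<le> f \<sigma>"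
    using C_sub_A by (auto simp: cone_extend_A cone_extend_apex)
  moreover have "(\<exists>\<nu>\<in>augmented C. \<exists>\<rho>\<in>augmented C. \<sigma> = insert a \<nu> \<and> \<tau> = insert a \<rho> \<and> facet \<nu> \<rho> \<and> ?h \<tau> \<le> ?h \<sigma>)
      \<longleftrightarrow> (\<exists>\<nu> \<rho>. \<sigma> = insert a \<nu> \<and> \<tau> = insert a \<rho> \<and> (\<nu>, \<rho>) \<in> gradient (augmented C) \<phi>)"
    (is "?cone \<longleftrightarrow> _")
  proof
    assume ?cone
    then obtain \<nu> \<rho> where "\<nu> \<in> augmented C" "\<rho> \<in> augmented C" "\<sigma> = insert a \<nu>" "\<tau> = insert a \<rho>"
      "facet \<nu> \<rho>" "?h \<tau> \<le> ?h \<sigma>" by blast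
    then show "\<exists>\<nu> \<rho>. \<sigma> = insert a \<nu> \<and> \<tau> = insert a \<rho> \<and> (\<nu>, \<rho>) \<in> gradient (augmented C) \<phi>"
      unfolding in_gradient_iff by (metis cone_extend_apex)
  next
    assume "\<exists>\<nu> \<rho>. \<sigma> = insert a \<nu> \<and> \<tau> = insert a \<rho> \<and> (\<nu>, \<rho>) \<in> gradient (augmented C) \<phi>"
    then obtain \<nu> \<rho> where "\<sigma> = insert a \<nu>" "\<tau> = insert a \<rho>" "\<nu> \<in> augmented C" "\<rho> \<in> augmented C"
      "facet \<nu> \<rho>" "\<phi> \<rho> \<le> \<phi> \<nu>" unfolding in_gradient_iff by blast
    then show ?cone by (metis cone_extend_apex)
  qed
  ultimately show ?thesis by argo
qed

context
  fixes f \<phi> :: "'a set \<Rightarrow> real"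
  assumes above: "\<And>\<sigma>. \<sigma> \<in> C \<Longrightarrow> f \<sigma> < \<phi> \<sigma>"
begin

lemma gradient_cone_above_iff:
  "(\<sigma>, \<tau>) \<in> gradient capped (cone_extend a f \<phi>) \<longleftrightarrow> (\<sigma>, \<tau>) \<in> gradient A f \<or>
     (\<exists>\<nu> \<rho>. \<sigma> = insert a \<nu> \<and> \<tau> = insert a \<rho> \<and> (\<nu>, \<rho>) \<in> gradient (augmented C) \<phi>)"
proof -
  have "\<not> (\<sigma> \<in> C \<and> \<tau> = insert a \<sigma> \<and> \<phi> \<sigma> \<le> f \<sigma>)" using above[of \<sigma>] by auto
  then show ?thesis unfolding gradient_cone_extend_iff by blast
qed

lemma gradient_apex_free:
  "(\<sigma>, \<tau>) \<in> gradient A f \<Longrightarrow> a \<notin> \<sigma> \<and> a \<notin> \<tau>"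
  "(\<nu>, \<rho>) \<in> gradient (augmented C) \<phi> \<Longrightarrow> a \<notin> \<nu> \<and> a \<notin> \<rho>"
  using cell_A cell_augmented unfolding in_gradient_iff by blast+

lemma discrete_morse_cone_above:
  assumes "discrete_morse A f" "discrete_morse (augmented C) \<phi>"
  shows "discrete_morse capped (cone_extend a f \<phi>)"
proof -
  have "finite A" "finite (augmented C)"
    using simplicial_complex_finite complex_A complex_C by auto
  then have sv: "single_valued (gradient A f)" "single_valued ((gradient A f)\<inverse>)"
      "single_valued (gradient (augmented C) \<phi>)" "single_valued ((gradient (augmented C) \<phi>)\<inverse>)"
    using assms discrete_morse_iff_single_valued by blast+
  have "single_valued (gradient capped (cone_extend a f \<phi>))"
    by (rule single_valued_apex_union[OF sv(1,3)])
      (use gradient_apex_free gradient_cone_above_iff in blast)+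
  moreover have "single_valued ((gradient capped (cone_extend a f \<phi>))\<inverse>)"
  proof (rule single_valued_apex_union[OF sv(2,4)])
    fix x y assume "(x, y) \<in> (gradient capped (cone_extend a f \<phi>))\<inverse>"
    then show "(x, y) \<in> (gradient A f)\<inverse> \<or>
        (\<exists>\<nu> \<rho>. x = insert a \<nu> \<and> y = insert a \<rho> \<and> (\<nu>, \<rho>) \<in> (gradient (augmented C) \<phi>)\<inverse>)"
      unfolding converse_iff gradient_cone_above_iff by blast
  qed (use gradient_apex_free in auto)
  ultimately show ?thesis
    unfolding discrete_morse_iff_single_valued[OF finite_capped] ..
qed

lemma critical_cone_above_iff:
  "critical capped (cone_extend a f \<phi>) \<sigma> \<longleftrightarrow>
     critical A f \<sigma> \<or> (\<exists>\<rho>. \<sigma> = insert a \<rho> \<and> critical (augmented C) \<phi> \<rho>)"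
proof -
  consider "\<sigma> \<in> A" | \<rho> where "\<rho> \<in> augmented C" "\<sigma> = insert a \<rho>" | "\<sigma> \<notin> capped"
    unfolding in_capped_iff by blast
  then show ?thesis
  proof cases
    case 1
    then have "\<sigma> \<noteq> insert a \<rho>" for \<rho> using cell_A by blast
    then show ?thesis using 1 by (simp add: critical_iff_unpaired gradient_cone_above_iff in_capped_iff)
  next
    case 2
    have same: "insert a \<nu> = insert a \<rho> \<longleftrightarrow> \<nu> = \<rho>" if "a \<notin> \<nu>" for \<nu>
      using insert_ident[OF that] cell_augmented[OF 2(1)] by blast
    have "(\<exists>\<tau>. (\<sigma>, \<tau>) \<in> gradient capped (cone_extend a f \<phi>)) \<longleftrightarrow>
        (\<exists>\<rho>'. (\<rho>, \<rho>') \<in> gradient (augmented C) \<phi>)"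
      "(\<exists>\<nu>. (\<nu>, \<sigma>) \<in> gradient capped (cone_extend a f \<phi>)) \<longleftrightarrow>
        (\<exists>\<nu>. (\<nu>, \<rho>) \<in> gradient (augmented C) \<phi>)"
      using gradient_apex_free same unfolding gradient_cone_above_iff 2(2) by blast+
    then have "critical capped (cone_extend a f \<phi>) \<sigma> \<longleftrightarrow> critical (augmented C) \<phi> \<rho>"
      using 2 unfolding critical_iff_unpaired in_capped_iff by blast
    moreover have "\<rho>' = \<rho>" if "\<sigma> = insert a \<rho>'" "critical (augmented C) \<phi> \<rho>'" for \<rho>'
    proof -
      have "a \<notin> \<rho>'" using that(2) cell_augmented unfolding critical_def by blast
      then show ?thesis using that(1) same 2(2) by metis
    qed
    moreover have "\<not> critical A f \<sigma>" using 2(2) cell_A unfolding critical_def by blast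
    ultimately show ?thesis using 2(2) by blast
  next
    case 3
    then show ?thesis unfolding critical_iff_unpaired in_capped_iff by blast
  qed
qed

end

end

text \<open>Cone cells over cells of \<open>C\<close> paired inside \<open>C\<close> are raised by \<open>c\<close>, which is smaller than
  every positive gap of \<open>f\<close> along a facet of \<open>C\<close> and so keeps the order of every facet pair;
  the remaining cells of \<open>C\<close> then pair with their own cones, and the apex lies below
  everything.\<close>

locale cone_copying = cone_over A C a for A C :: "'a set set" and a :: 'a +
  fixes f :: "'a set \<Rightarrow> real" and b c :: real
  assumes morse: "discrete_morse A f"
    and arrows_within_C: "\<And>\<sigma> \<tau>. \<sigma> \<in> C \<Longrightarrow> (\<sigma>, \<tau>) \<in> gradient A f \<or> (\<tau>, \<sigma>) \<in> gradient A f \<Longrightarrow> \<tau> \<in> C"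
    and gap_pos: "0 < c"
    and gap: "\<And>\<nu> \<rho>. \<nu> \<in> C \<Longrightarrow> \<rho> \<in> C \<Longrightarrow> facet \<nu> \<rho> \<Longrightarrow> f \<nu> < f \<rho> \<Longrightarrow> c < f \<rho> - f \<nu>"
    and below: "\<And>\<rho>. \<rho> \<in> C \<Longrightarrow> b < f \<rho>"
begin

definition paired :: "'a set \<Rightarrow> bool" where
  "paired \<sigma> \<longleftrightarrow> (\<exists>\<tau>. (\<sigma>, \<tau>) \<in> gradient A f \<or> (\<tau>, \<sigma>) \<in> gradient A f)"

definition lift :: "'a set \<Rightarrow> real" where
  "lift \<rho> = (if \<rho> = {} then b else if paired \<rho> then f \<rho> + c else f \<rho>)"

lemma lift_ge: "\<rho> \<in> C \<Longrightarrow> f \<rho> \<le> lift \<rho> \<and> b < lift \<rho>"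
  using cell_A C_sub_A below gap_pos unfolding lift_def by force

lemma lift_le_f_iff: "\<sigma> \<in> C \<Longrightarrow> lift \<sigma> \<le> f \<sigma> \<longleftrightarrow> \<not> paired \<sigma>"
  using cell_A C_sub_A gap_pos unfolding lift_def by force

lemma lift_le_iff:
  assumes "\<nu> \<in> C" "\<rho> \<in> C" "facet \<nu> \<rho>"
  shows "lift \<rho> \<le> lift \<nu> \<longleftrightarrow> (\<nu>, \<rho>) \<in> gradient A f"
proof
  assume "(\<nu>, \<rho>) \<in> gradient A f"
  then have "paired \<nu>" "paired \<rho>" "f \<rho> \<le> f \<nu>" unfolding paired_def in_gradient_iff by blast+
  then show "lift \<rho> \<le> lift \<nu>" using assms(1,2) cell_A C_sub_A unfolding lift_def by auto
next
  assume "lift \<rho> \<le> lift \<nu>"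
  show "(\<nu>, \<rho>) \<in> gradient A f"
  proof (rule ccontr)
    assume "(\<nu>, \<rho>) \<notin> gradient A f"
    then have "f \<nu> < f \<rho>" using assms C_sub_A unfolding in_gradient_iff by auto
    moreover have "lift \<nu> \<le> f \<nu> + c" using assms(1) cell_A C_sub_A gap_pos unfolding lift_def by auto
    ultimately show False using gap[OF assms] lift_ge[OF assms(2)] \<open>lift \<rho> \<le> lift \<nu>\<close> by linarith
  qed
qed

lemma gradient_lift_iff:
  "(\<nu>, \<rho>) \<in> gradient (augmented C) lift \<longleftrightarrow> \<nu> \<in> C \<and> \<rho> \<in> C \<and> (\<nu>, \<rho>) \<in> gradient A f"
proof
  assume grad: "(\<nu>, \<rho>) \<in> gradient (augmented C) lift"
  then have "\<rho> \<noteq> {}" unfolding in_gradient_iff facet_def by auto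
  then have "\<rho> \<in> C" using grad unfolding in_gradient_iff by blast
  moreover have "\<nu> \<noteq> {}"
    using grad lift_ge[OF \<open>\<rho> \<in> C\<close>] unfolding in_gradient_iff lift_def by auto
  then have "\<nu> \<in> C" using grad unfolding in_gradient_iff by blast
  ultimately show "\<nu> \<in> C \<and> \<rho> \<in> C \<and> (\<nu>, \<rho>) \<in> gradient A f"
    using grad lift_le_iff unfolding in_gradient_iff by blast
next
  assume "\<nu> \<in> C \<and> \<rho> \<in> C \<and> (\<nu>, \<rho>) \<in> gradient A f"
  then show "(\<nu>, \<rho>) \<in> gradient (augmented C) lift"
    using lift_le_iff unfolding in_gradient_iff by blast
qed

abbreviation copied :: "'a set \<Rightarrow> real" where
  "copied \<equiv> cone_extend a f lift"

lemma gradient_copied_iff: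
  "(\<sigma>, \<tau>) \<in> gradient capped copied \<longleftrightarrow>
     (\<sigma>, \<tau>) \<in> gradient A f \<or> \<sigma> \<in> C \<and> \<not> paired \<sigma> \<and> \<tau> = insert a \<sigma> \<or>
     (\<exists>\<nu> \<rho>. \<sigma> = insert a \<nu> \<and> \<tau> = insert a \<rho> \<and> \<nu> \<in> C \<and> \<rho> \<in> C \<and> (\<nu>, \<rho>) \<in> gradient A f)"
  unfolding gradient_cone_extend_iff gradient_lift_iff using lift_le_f_iff by blast

lemma gradient_A_apex_free: "(\<sigma>, \<tau>) \<in> gradient A f \<Longrightarrow> a \<notin> \<sigma> \<and> a \<notin> \<tau> \<and> paired \<sigma> \<and> paired \<tau>"
  using cell_A unfolding in_gradient_iff paired_def by blast

lemma single_valued_gradient_copied: "single_valued (gradient capped copied)"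
proof (rule single_valuedI)
  have sv: "single_valued (gradient A f)"
    using morse discrete_morse_iff_single_valued simplicial_complex_finite[OF complex_A] by blast
  fix \<sigma> \<tau> \<tau>' assume "(\<sigma>, \<tau>) \<in> gradient capped copied" "(\<sigma>, \<tau>') \<in> gradient capped copied"
  then show "\<tau> = \<tau>'" unfolding gradient_copied_iff
    using sv gradient_A_apex_free insert_apex_inj cell_A C_sub_A
    by (elim disjE exE conjE) (blast dest: single_valuedD)+
qed

lemma single_valued_converse_gradient_copied: "single_valued ((gradient capped copied)\<inverse>)"
proof (rule single_valuedI)
  have sv: "single_valued ((gradient A f)\<inverse>)"
    using morse discrete_morse_iff_single_valued simplicial_complex_finite[OF complex_A] by blast
  fix \<tau> \<sigma> \<sigma>' assume "(\<tau>, \<sigma>) \<in> (gradient capped copied)\<inverse>" "(\<tau>, \<sigma>') \<in> (gradient capped copied)\<inverse>"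
  then show "\<sigma> = \<sigma>'" unfolding converse_iff gradient_copied_iff
    using sv gradient_A_apex_free insert_apex_inj cell_A C_sub_A
    by (elim disjE exE conjE) (blast dest: single_valuedD)+
qed

lemma C_cells_paired:
  assumes "\<rho> \<in> C"
  shows "\<exists>\<tau>. (\<rho>, \<tau>) \<in> gradient capped copied \<or> (\<tau>, \<rho>) \<in> gradient capped copied"
    and "\<exists>\<tau>. (insert a \<rho>, \<tau>) \<in> gradient capped copied \<or> (\<tau>, insert a \<rho>) \<in> gradient capped copied"
proof -
  show "\<exists>\<tau>. (\<rho>, \<tau>) \<in> gradient capped copied \<or> (\<tau>, \<rho>) \<in> gradient capped copied"
    using assms unfolding paired_def gradient_copied_iff by blast
  show "\<exists>\<tau>. (insert a \<rho>, \<tau>) \<in> gradient capped copied \<or> (\<tau>, insert a \<rho>) \<in> gradient capped copied"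
  proof (cases "paired \<rho>")
    case True
    then obtain \<tau> where "(\<rho>, \<tau>) \<in> gradient A f \<or> (\<tau>, \<rho>) \<in> gradient A f" unfolding paired_def by blast
    moreover from this have "\<tau> \<in> C" using arrows_within_C assms by blast
    ultimately show ?thesis using assms unfolding gradient_copied_iff by blast
  next
    case False
    then show ?thesis using assms unfolding gradient_copied_iff by blast
  qed
qed

lemma critical_copied_iff: "critical capped copied \<sigma> \<longleftrightarrow> critical A f \<sigma> \<and> \<sigma> \<notin> C \<or> \<sigma> = {a}"
proof -
  have C_cell: "\<nu> \<noteq> {} \<and> a \<notin> \<nu> \<and> \<nu> \<in> A" if "\<nu> \<in> C" for \<nu>
    using that C_sub_A cell_A by blast
  consider "\<sigma> \<in> A" "\<sigma> \<notin> C" | "\<sigma> \<in> C" | "\<sigma> = {a}" | \<rho> where "\<rho> \<in> C" "\<sigma> = insert a \<rho>" | "\<sigma> \<notin> capped"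
    unfolding in_capped_iff by blast
  then show ?thesis
  proof cases
    case 1
    then have "\<sigma> \<noteq> insert a \<nu>" for \<nu> using cell_A by blast
    then show ?thesis using 1 unfolding critical_iff_unpaired gradient_copied_iff in_capped_iff by blast
  next
    case 2
    then show ?thesis using C_cells_paired(1) C_cell unfolding critical_iff_unpaired by blast
  next
    case 3
    have "{a} \<noteq> insert a \<nu>" if "\<nu> \<in> C" for \<nu> using C_cell[OF that] by blast
    moreover have "{a} \<notin> A" using cell_A by blast
    ultimately show ?thesis
      using 3 C_cell gradient_A_apex_free
      unfolding critical_iff_unpaired gradient_copied_iff in_capped_iff by blast
  next
    case 4
    moreover have "\<sigma> \<notin> A" "\<sigma> \<noteq> {a}" using 4 C_cell cell_A by blast+
    ultimately show ?thesis using C_cells_paired(2) unfolding critical_iff_unpaired by blast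
  next
    case 5
    then show ?thesis unfolding critical_iff_unpaired in_capped_iff by blast
  qed
qed

end

lemma finite_positive_lower_bound:
  fixes D :: "real set"
  assumes "finite D" "\<And>x. x \<in> D \<Longrightarrow> 0 < x"
  shows "\<exists>c>0. \<forall>x\<in>D. c < x"
proof -
  have "0 < Min (insert 1 D)" using assms by simp
  moreover have "Min (insert 1 D) \<le> x" if "x \<in> D" for x using assms(1) that by simp
  ultimately show ?thesis by (intro exI[of _ "Min (insert 1 D) / 2"]) force
qed

lemma (in cone_over) cone_copying_exists:
  assumes morse: "discrete_morse A f"
    and arrows_within_C: "\<And>\<sigma> \<tau>. \<sigma> \<in> C \<Longrightarrow> (\<sigma>, \<tau>) \<in> gradient A f \<or> (\<tau>, \<sigma>) \<in> gradient A f \<Longrightarrow> \<tau> \<in> C"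
  shows "\<exists>\<phi>. discrete_morse capped (cone_extend a f \<phi>) \<and>
    (\<forall>\<sigma>. critical capped (cone_extend a f \<phi>) \<sigma> \<longleftrightarrow> critical A f \<sigma> \<and> \<sigma> \<notin> C \<or> \<sigma> = {a})"
proof -
  have fin: "finite C" using simplicial_complex_finite[OF complex_C] .
  obtain m where "\<forall>\<rho>\<in>C. m \<le> f \<rho>"
    using bdd_below_finite[of "f ` C"] fin unfolding bdd_below_def by auto
  then have below: "\<And>\<rho>. \<rho> \<in> C \<Longrightarrow> m - 1 < f \<rho>" by force
  let ?P = "{(\<nu>, \<rho>) \<in> C \<times> C. facet \<nu> \<rho> \<and> f \<nu> < f \<rho>}"
  let ?D = "(\<lambda>(\<nu>, \<rho>). f \<rho> - f \<nu>) ` ?P"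
  have "?P \<subseteq> C \<times> C" by blast
  then have "finite ?D" using fin finite_subset by blast
  moreover have "\<forall>x\<in>?D. 0 < x" by auto
  ultimately obtain c where c: "0 < c" "\<forall>x\<in>?D. c < x"
    using finite_positive_lower_bound[of ?D] by blast
  have "c < f \<rho> - f \<nu>" if "\<nu> \<in> C" "\<rho> \<in> C" "facet \<nu> \<rho>" "f \<nu> < f \<rho>" for \<nu> \<rho>
  proof -
    have "f \<rho> - f \<nu> \<in> ?D" using that by (intro image_eqI[of _ _ "(\<nu>, \<rho>)"]) auto
    then show ?thesis using c(2) by blast
  qed
  then interpret cone_copying A C a f "m - 1" c
    using morse arrows_within_C below c(1) by unfold_locales
  have "discrete_morse capped copied"
    unfolding discrete_morse_iff_single_valued[OF finite_capped]
    using single_valued_gradient_copied single_valued_converse_gradient_copied ..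
  then show ?thesis using critical_copied_iff by blast
qed

section \<open>A Morse function on the cone over a cycle\<close>

lemma connected_cx_rooted_tree:
  assumes conn: "connected_cx C" and root: "v0 \<in> verts C"
  obtains d :: "'a \<Rightarrow> nat" and par where "d v0 = 0"
    "\<And>v. v \<in> verts C \<Longrightarrow> v \<noteq> v0 \<Longrightarrow> par v \<in> verts C \<and> {v, par v} \<in> C \<and> par v \<noteq> v \<and> d (par v) < d v"
proof -
  define adj where "adj x y \<longleftrightarrow> {x, y} \<in> C" for x y
  define d where "d v = (LEAST k. (adj ^^ k) v0 v)" for v
  have reach: "\<exists>k. (adj ^^ k) v0 v" if "v \<in> verts C" for v
    using conn root that unfolding connected_cx_def adj_def by (simp add: rtranclp_power)
  have dist: "(adj ^^ d v) v0 v" if "v \<in> verts C" for v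
    unfolding d_def using reach[OF that] by (rule LeastI_ex)
  have closer: "\<exists>u. u \<in> verts C \<and> {v, u} \<in> C \<and> u \<noteq> v \<and> d u < d v"
    if v: "v \<in> verts C" "v \<noteq> v0" for v
  proof -
    obtain k where k: "d v = Suc k"
      using dist[OF v(1)] v(2) by (cases "d v") auto
    with dist[OF v(1)] obtain u where u: "(adj ^^ k) v0 u" "adj u v"
      by (metis relpowp_Suc_E)
    have "d u \<le> k" unfolding d_def using u(1) by (rule Least_le)
    moreover have "{v, u} \<in> C" using u(2) unfolding adj_def by (simp add: insert_commute)
    ultimately show ?thesis using k unfolding verts_def by (intro exI[of _ u]) auto
  qed
  define par where "par v = (SOME u. u \<in> verts C \<and> {v, u} \<in> C \<and> u \<noteq> v \<and> d u < d v)" for v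
  have "d v0 = 0" unfolding d_def by (rule Least_eq_0) simp
  moreover have "par v \<in> verts C \<and> {v, par v} \<in> C \<and> par v \<noteq> v \<and> d (par v) < d v"
    if "v \<in> verts C" "v \<noteq> v0" for v
    unfolding par_def using someI_ex[OF closer[OF that]] .
  ultimately show ?thesis by (rule that)
qed

locale rooted_tree =
  fixes C :: "'a set set" and v0 :: 'a and d :: "'a \<Rightarrow> nat" and par :: "'a \<Rightarrow> 'a"
  assumes complex: "simplicial_complex C" and graph: "\<And>\<sigma>. \<sigma> \<in> C \<Longrightarrow> card \<sigma> \<le> 2"
    and root: "v0 \<in> verts C" and depth_root: "d v0 = 0"
    and parent: "\<And>v. v \<in> verts C \<Longrightarrow> v \<noteq> v0 \<Longrightarrow>
                   par v \<in> verts C \<and> {v, par v} \<in> C \<and> par v \<noteq> v \<and> d (par v) < d v"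
begin

definition tree_edges :: "'a set set" where
  "tree_edges = (\<lambda>w. {w, par w}) ` (verts C - {v0})"

text \<open>The apex is paired with the edge to the root, each other cone edge with the triangle over
  the tree edge to its parent, and the triangles over non-tree edges stay critical.\<close>

definition height :: "'a set \<Rightarrow> nat" where
  "height \<rho> = (if \<rho> = {} then 0 else 2 * Max (d ` \<rho>) + (if \<rho> \<in> cells C 1 - tree_edges then 1 else 0))"

definition tree_pair :: "'a set \<Rightarrow> 'a set \<Rightarrow> bool" where
  "tree_pair \<nu> \<rho> \<longleftrightarrow> \<nu> = {} \<and> \<rho> = {v0} \<or> (\<exists>w\<in>verts C - {v0}. \<nu> = {w} \<and> \<rho> = {w, par w})"

lemma depth_eq_0_iff: "v \<in> verts C \<Longrightarrow> d v = 0 \<longleftrightarrow> v = v0"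
  using parent[of v] depth_root by fastforce

lemma tree_edge_inj:
  assumes "v \<in> verts C - {v0}" "w \<in> verts C - {v0}" "{v, par v} = {w, par w}"
  shows "v = w"
proof (rule ccontr)
  assume "v \<noteq> w"
  then have "v = par w" "w = par v" using assms(3) by (metis doubleton_eq_iff)+
  moreover have "d (par v) < d v" "d (par w) < d w" using parent assms(1,2) by auto
  ultimately show False by simp
qed

lemma tree_edges_sub: "tree_edges \<subseteq> cells C 1"
proof
  fix e assume "e \<in> tree_edges"
  then obtain w where "w \<in> verts C - {v0}" "e = {w, par w}" unfolding tree_edges_def by blast
  then show "e \<in> cells C 1" using parent[of w] unfolding cells_def by auto
qed

lemma finite_verts: "finite (verts C)"
  using simplicial_complex_finite[OF complex] simplicial_complex_cell[OF complex]
  unfolding verts_def by blast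

lemma card_tree_edges: "card tree_edges + 1 = card (verts C)"
proof -
  have "inj_on (\<lambda>w. {w, par w}) (verts C - {v0})" using tree_edge_inj by (rule inj_onI)
  then have "card tree_edges = card (verts C - {v0})" unfolding tree_edges_def by (rule card_image)
  then show ?thesis using root finite_verts
    by (metis Suc_eq_plus1 card_Suc_Diff1)
qed

lemma vertex_cell_iff: "{v} \<in> C \<longleftrightarrow> v \<in> verts C"
proof
  assume "v \<in> verts C"
  then obtain \<sigma> where "\<sigma> \<in> C" "v \<in> \<sigma>" unfolding verts_def by blast
  then show "{v} \<in> C" using simplicial_complex_face[OF complex, of \<sigma> "{v}"] by blast
qed (auto simp: verts_def)

lemma augmented_cell_cases:
  assumes "\<rho> \<in> augmented C"
  shows "\<rho> = {} \<or> (\<exists>v\<in>verts C. \<rho> = {v}) \<or> \<rho> \<in> cells C 1"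
proof (cases "\<rho> = {}")
  case False
  then have "\<rho> \<in> C" using assms by blast
  then have "card \<rho> \<noteq> 0" "card \<rho> \<le> 2" using graph simplicial_complex_cell[OF complex] by auto
  then consider "card \<rho> = 1" | "card \<rho> = 2" by linarith
  then show ?thesis
  proof cases
    case 1
    then obtain v where "\<rho> = {v}" by (rule card_1_singletonE)
    then show ?thesis using \<open>\<rho> \<in> C\<close> vertex_cell_iff by blast
  qed (use \<open>\<rho> \<in> C\<close> in \<open>simp add: cells_def\<close>)
qed simp

lemma height_vertex: "height {v} = 2 * d v"
  unfolding height_def cells_def by simp

lemma height_tree_edge:
  assumes "w \<in> verts C - {v0}"
  shows "height {w, par w} = 2 * d w"
proof -
  have "{w, par w} \<in> tree_edges" using assms unfolding tree_edges_def by blast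
  moreover have "Max (d ` {w, par w}) = d w" using parent[of w] assms by simp
  ultimately show ?thesis unfolding height_def by simp
qed

lemma low_edge:
  assumes "e \<in> cells C 1" "x \<in> e" "height e \<le> 2 * d x"
  shows "x \<in> verts C - {v0} \<and> e = {x, par x}"
proof -
  have "card e = 2" using assms(1) unfolding cells_def by simp
  then have "finite e" "e \<noteq> {}" by (auto intro: card_ge_0_finite)
  then have max: "d x \<le> Max (d ` e)" using assms(2) by simp
  have "e \<in> tree_edges"
  proof (rule ccontr)
    assume "e \<notin> tree_edges"
    then have "height e = 2 * Max (d ` e) + 1" using assms(1) \<open>e \<noteq> {}\<close> unfolding height_def by simp
    then show False using assms(3) max by linarith
  qed
  then obtain w where w: "w \<in> verts C - {v0}" "e = {w, par w}" unfolding tree_edges_def by blast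
  then have "d w \<le> d x" using assms(3) height_tree_edge by simp
  moreover have "d (par w) < d w" using parent w(1) by blast
  moreover have "x = w \<or> x = par w" using w(2) assms(2) by blast
  ultimately have "x = w" by (metis not_le)
  then show ?thesis using w by blast
qed

lemma gradient_height_iff:
  "(\<nu>, \<rho>) \<in> gradient (augmented C) (\<lambda>\<rho>. c + real (height \<rho>)) \<longleftrightarrow> tree_pair \<nu> \<rho>"
proof
  assume "(\<nu>, \<rho>) \<in> gradient (augmented C) (\<lambda>\<rho>. c + real (height \<rho>))"
  then have \<nu>: "\<nu> \<in> augmented C" and \<rho>: "\<rho> \<in> augmented C" and facet: "facet \<nu> \<rho>"
    and low: "height \<rho> \<le> height \<nu>" unfolding in_gradient_iff by auto
  have \<rho>C: "\<rho> \<in> C" using facet \<rho> unfolding facet_def by auto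
  from augmented_cell_cases[OF \<nu>] show "tree_pair \<nu> \<rho>"
  proof (elim disjE bexE)
    assume "\<nu> = {}"
    then obtain v where "\<rho> = {v}" using facet unfolding facet_def by (auto simp: card_1_singleton_iff)
    then have "v \<in> verts C" "d v = 0" using \<rho>C low \<open>\<nu> = {}\<close> vertex_cell_iff height_vertex
      by (auto simp: height_def)
    then show ?thesis using \<open>\<nu> = {}\<close> \<open>\<rho> = {v}\<close> depth_eq_0_iff unfolding tree_pair_def by blast
  next
    fix v assume "\<nu> = {v}"
    then have "\<rho> \<in> cells C 1" "v \<in> \<rho>" using facet \<rho>C unfolding facet_def cells_def by auto
    then show ?thesis using low_edge low \<open>\<nu> = {v}\<close> height_vertex unfolding tree_pair_def by metis
  next
    assume "\<nu> \<in> cells C 1"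
    then show ?thesis using facet graph[OF \<rho>C] unfolding facet_def cells_def by simp
  qed
next
  assume "tree_pair \<nu> \<rho>"
  then show "(\<nu>, \<rho>) \<in> gradient (augmented C) (\<lambda>\<rho>. c + real (height \<rho>))"
    unfolding tree_pair_def
  proof (elim disjE bexE conjE)
    assume "\<nu> = {}" "\<rho> = {v0}"
    then show ?thesis using root vertex_cell_iff depth_root height_vertex
      unfolding in_gradient_iff facet_def by (simp add: height_def)
  next
    fix w assume w: "w \<in> verts C - {v0}" "\<nu> = {w}" "\<rho> = {w, par w}"
    then show ?thesis using parent[of w] vertex_cell_iff height_vertex height_tree_edge
      unfolding in_gradient_iff facet_def by auto
  qed
qed

lemma tree_pair_unique:
  "tree_pair \<nu> \<rho> \<Longrightarrow> tree_pair \<nu> \<rho>' \<Longrightarrow> \<rho> = \<rho>'"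
  "tree_pair \<nu> \<rho> \<Longrightarrow> tree_pair \<nu>' \<rho> \<Longrightarrow> \<nu> = \<nu>'"
proof -
  have "{v0} \<noteq> {w, par w}" if "w \<in> verts C - {v0}" for w using that by blast
  then show "tree_pair \<nu> \<rho> \<Longrightarrow> tree_pair \<nu> \<rho>' \<Longrightarrow> \<rho> = \<rho>'"
      "tree_pair \<nu> \<rho> \<Longrightarrow> tree_pair \<nu>' \<rho> \<Longrightarrow> \<nu> = \<nu>'"
    using tree_edge_inj unfolding tree_pair_def by blast+
qed

lemma discrete_morse_height: "discrete_morse (augmented C) (\<lambda>\<rho>. c + real (height \<rho>))"
  unfolding discrete_morse_iff_single_valued[OF finite_insert[THEN iffD2, OF simplicial_complex_finite[OF complex]]]
    single_valued_def converse_iff gradient_height_iff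
  using tree_pair_unique by blast

lemma critical_height_iff: "critical (augmented C) (\<lambda>\<rho>. c + real (height \<rho>)) \<rho> \<longleftrightarrow> \<rho> \<in> cells C 1 - tree_edges"
proof
  assume "critical (augmented C) (\<lambda>\<rho>. c + real (height \<rho>)) \<rho>"
  then have \<rho>: "\<rho> \<in> augmented C" and unpaired: "\<And>\<tau>. \<not> tree_pair \<rho> \<tau>" "\<And>\<nu>. \<not> tree_pair \<nu> \<rho>"
    unfolding critical_iff_unpaired gradient_height_iff by auto
  consider "\<rho> = {}" | v where "v \<in> verts C" "\<rho> = {v}" | "\<rho> \<in> cells C 1"
    using augmented_cell_cases[OF \<rho>] by blast
  then have "\<rho> \<in> cells C 1"
  proof cases
    case 1
    then show ?thesis using unpaired(1) unfolding tree_pair_def by blast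
  next
    case 2
    then show ?thesis using unpaired depth_eq_0_iff unfolding tree_pair_def by (cases "v = v0") blast+
  qed
  moreover have "\<rho> \<notin> tree_edges" using unpaired(2) unfolding tree_pair_def tree_edges_def by blast
  ultimately show "\<rho> \<in> cells C 1 - tree_edges" by blast
next
  assume \<rho>: "\<rho> \<in> cells C 1 - tree_edges"
  then have "card \<rho> = 2" "\<rho> \<in> C" unfolding cells_def by auto
  moreover have "\<not> tree_pair \<nu> \<rho>" for \<nu>
    using \<rho> \<open>card \<rho> = 2\<close> unfolding tree_pair_def tree_edges_def by auto
  ultimately show "critical (augmented C) (\<lambda>\<rho>. c + real (height \<rho>)) \<rho>"
    unfolding critical_iff_unpaired gradient_height_iff tree_pair_def by auto
qed

end

lemma augmented_graph_morse:
  assumes complex: "simplicial_complex C" and graph: "\<And>\<sigma>. \<sigma> \<in> C \<Longrightarrow> card \<sigma> \<le> 2"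
    and conn: "connected_cx C" and root: "v0 \<in> verts C"
  obtains \<phi> T where "discrete_morse (augmented C) \<phi>" "\<And>\<rho>. b < \<phi> \<rho>"
    "T \<subseteq> cells C 1" "card T + 1 = card (verts C)" "\<And>\<rho>. critical (augmented C) \<phi> \<rho> \<longleftrightarrow> \<rho> \<in> cells C 1 - T"
proof -
  obtain d :: "'a \<Rightarrow> nat" and par where "d v0 = 0"
    "\<And>v. v \<in> verts C \<Longrightarrow> v \<noteq> v0 \<Longrightarrow> par v \<in> verts C \<and> {v, par v} \<in> C \<and> par v \<noteq> v \<and> d (par v) < d v"
    by (fact connected_cx_rooted_tree[OF conn root])
  then interpret rooted_tree C v0 d par
    using complex graph root by (unfold_locales; blast)
  show thesis
    by (rule that[OF discrete_morse_height[of "b + 1"] _ tree_edges_sub card_tree_edges critical_height_iff])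
      simp
qed

lemma card_edges_2_regular:
  assumes "finite E" "finite V" "\<And>e. e \<in> E \<Longrightarrow> e \<subseteq> V \<and> card e = 2"
    and "\<And>v. v \<in> V \<Longrightarrow> card {e\<in>E. v \<in> e} = 2"
  shows "card E = card V"
proof -
  have "2 * card V = (\<Sum>v\<in>V. card {e\<in>E. v \<in> e})" using assms(4) by simp
  also have "\<dots> = (\<Sum>v\<in>V. \<Sum>e\<in>E. if v \<in> e then 1 else 0)"
    using assms(1) by (simp add: sum.If_cases Int_def)
  also have "\<dots> = (\<Sum>e\<in>E. \<Sum>v\<in>V. if v \<in> e then 1 else 0)" by (rule sum.swap)
  also have "\<dots> = (\<Sum>e\<in>E. 2)"
    using assms(2,3) by (intro sum.cong) (simp_all add: sum.If_cases Int_absorb1)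
  finally show ?thesis by simp
qed

lemma simple_closed_curve_morse:
  assumes curve: "simple_closed_curve C"
  obtains \<phi> e0 where "discrete_morse (augmented C) \<phi>" "\<And>\<rho>. b < \<phi> \<rho>" "e0 \<in> cells C 1"
    "\<And>\<rho>. critical (augmented C) \<phi> \<rho> \<longleftrightarrow> \<rho> = e0"
proof -
  have complex: "simplicial_complex C" and graph: "\<And>\<sigma>. \<sigma> \<in> C \<Longrightarrow> card \<sigma> \<le> 2"
    and conn: "connected_cx C" and "C \<noteq> {}"
    and degree: "\<And>v. v \<in> verts C \<Longrightarrow> card {e\<in>cells C 1. v \<in> e} = 2"
    using curve unfolding simple_closed_curve_def by auto
  obtain v0 where root: "v0 \<in> verts C"
    using \<open>C \<noteq> {}\<close> simplicial_complex_cell[OF complex] unfolding verts_def by blast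
  obtain \<phi> T where \<phi>: "discrete_morse (augmented C) \<phi>" "\<And>\<rho>. b < \<phi> \<rho>"
    and T: "T \<subseteq> cells C 1" "card T + 1 = card (verts C)"
    and crit: "\<And>\<rho>. critical (augmented C) \<phi> \<rho> \<longleftrightarrow> \<rho> \<in> cells C 1 - T"
    using augmented_graph_morse[OF complex graph conn root, where b = b] by blast
  have finite: "finite (cells C 1)" "finite (verts C)"
    using simplicial_complex_finite[OF complex] simplicial_complex_cell[OF complex]
    unfolding cells_def verts_def by auto
  have "card (cells C 1) = card (verts C)"
    by (rule card_edges_2_regular[OF finite _ degree]) (auto simp: cells_def verts_def)
  then have "card (cells C 1 - T) = 1"
    using T finite by (simp add: card_Diff_subset finite_subset)
  then obtain e0 where "cells C 1 - T = {e0}" by (rule card_1_singletonE)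
  then show thesis using that[OF \<phi>] crit by blast
qed

section \<open>Splitting along the separating curve\<close>

locale separated_complex =
  fixes M A1 A2 C :: "'a set set" and f :: "'a set \<Rightarrow> real"
  assumes complex_M: "simplicial_complex M"
    and complex_A1: "simplicial_complex A1" and complex_A2: "simplicial_complex A2"
    and union: "A1 \<union> A2 = M" and inter: "A1 \<inter> A2 = C"
    and curve: "simple_closed_curve C" and morse: "discrete_morse M f"
begin

lemma complex_C: "simplicial_complex C"
  using curve unfolding simple_closed_curve_def by blast

lemma coface_outside_A1: "\<sigma> \<in> A1 \<Longrightarrow> \<tau> \<in> M - A1 \<Longrightarrow> facet \<sigma> \<tau> \<Longrightarrow> \<sigma> \<in> C"
  using simplicial_complex_face[OF complex_A2, of \<tau> \<sigma>] simplicial_complex_cell[OF complex_A1, of \<sigma>]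
    union inter unfolding facet_def by blast

lemma coface_outside_A2: "\<sigma> \<in> A2 \<Longrightarrow> \<tau> \<in> M - A2 \<Longrightarrow> facet \<sigma> \<tau> \<Longrightarrow> \<sigma> \<in> C"
  using simplicial_complex_face[OF complex_A1, of \<tau> \<sigma>] simplicial_complex_cell[OF complex_A2, of \<sigma>]
    union inter unfolding facet_def by blast

lemma morse_A1: "discrete_morse A1 f" and morse_A2: "discrete_morse A2 f"
  using discrete_morse_subcomplex[OF morse] simplicial_complex_finite[OF complex_M] union by blast+

lemma cap_adding_critical_triangle:
  assumes apex: "a \<notin> verts M"
    and noarrow: "\<forall>\<sigma>\<in>C. \<forall>\<tau>. (\<sigma>, \<tau>) \<in> gradient M f \<or> (\<tau>, \<sigma>) \<in> gradient M f \<longrightarrow> \<tau> \<in> A1"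
  obtains h e where "discrete_morse (A1 \<union> cone a C) h" "\<forall>\<sigma>\<in>A1. h \<sigma> = f \<sigma>"
    "\<And>p. crit_cells (A1 \<union> cone a C) h p = crit_cells M f p \<inter> A1 \<union> (if p = 2 then {insert a e} else {})"
proof -
  interpret cone_over A1 C a
    using complex_A1 complex_C inter apex union by unfold_locales (auto simp: verts_def)
  have sub: "A1 \<subseteq> M" using union by blast
  have crit_A1: "critical A1 f \<sigma> \<longleftrightarrow> \<sigma> \<in> A1 \<and> critical M f \<sigma>" for \<sigma>
  proof (cases "\<sigma> \<in> A1")
    case True
    have "\<forall>\<tau>\<in>M - A1. facet \<sigma> \<tau> \<longrightarrow> f \<sigma> < f \<tau>"
    proof (intro ballI impI, rule ccontr)
      fix \<tau> assume \<tau>: "\<tau> \<in> M - A1" "facet \<sigma> \<tau>" and "\<not> f \<sigma> < f \<tau>"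
      then have "(\<sigma>, \<tau>) \<in> gradient M f" using True sub unfolding in_gradient_iff by auto
      then show False using noarrow coface_outside_A1[OF True \<tau>] \<tau>(1) by blast
    qed
    then show ?thesis using critical_subcomplex_iff[OF complex_M complex_A1 sub True] True by simp
  qed (simp add: critical_def)
  have "bdd_above (f ` C)" using simplicial_complex_finite[OF complex_C] by (intro bdd_above_finite) simp
  then obtain b where "\<And>\<sigma>. \<sigma> \<in> C \<Longrightarrow> f \<sigma> \<le> b" unfolding bdd_above_def by blast
  then obtain \<phi> e where \<phi>: "discrete_morse (augmented C) \<phi>" "\<And>\<sigma>. \<sigma> \<in> C \<Longrightarrow> f \<sigma> < \<phi> \<sigma>"
    and e: "e \<in> cells C 1" and crit_e: "\<And>\<rho>. critical (augmented C) \<phi> \<rho> \<longleftrightarrow> \<rho> = e"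
    using simple_closed_curve_morse[OF curve, where b = b] by (metis le_less_trans)
  have crit: "critical capped (cone_extend a f \<phi>) \<sigma> \<longleftrightarrow> \<sigma> \<in> A1 \<and> critical M f \<sigma> \<or> \<sigma> = insert a e" for \<sigma>
    using critical_cone_above_iff[of f \<phi> \<sigma>, OF \<phi>(2)] crit_A1 crit_e by blast
  have "e \<in> C" "card e = 2" using e unfolding cells_def by auto
  then have "card (insert a e) = 3" "insert a e \<in> capped"
    using cell_A C_sub_A unfolding in_capped_iff by auto
  then have "crit_cells capped (cone_extend a f \<phi>) p = crit_cells M f p \<inter> A1 \<union> (if p = 2 then {insert a e} else {})" for p
    unfolding crit_cells_def cells_def crit using sub by auto
  then show thesis
    using that[OF discrete_morse_cone_above[of f \<phi>, OF \<phi>(2) morse_A1 \<phi>(1)]] cone_extend_A by blast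
qed

lemma cap_adding_critical_apex:
  assumes apex: "a \<notin> verts M"
    and noarrow: "\<forall>\<sigma>\<in>C. \<forall>\<tau>. (\<sigma>, \<tau>) \<in> gradient M f \<or> (\<tau>, \<sigma>) \<in> gradient M f \<longrightarrow> \<tau> \<in> A1"
  obtains h where "discrete_morse (A2 \<union> cone a C) h" "\<forall>\<sigma>\<in>A2. h \<sigma> = f \<sigma>"
    "\<And>p. crit_cells (A2 \<union> cone a C) h p = crit_cells M f p \<inter> (A2 - C) \<union> (if p = 0 then {{a}} else {})"
proof -
  interpret cone_over A2 C a
    using complex_A2 complex_C inter apex union by unfold_locales (auto simp: verts_def)
  have sub: "A2 \<subseteq> M" using union by blast
  have "\<exists>\<phi>. discrete_morse capped (cone_extend a f \<phi>) \<and>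
      (\<forall>\<sigma>. critical capped (cone_extend a f \<phi>) \<sigma> \<longleftrightarrow> critical A2 f \<sigma> \<and> \<sigma> \<notin> C \<or> \<sigma> = {a})"
  proof (rule cone_copying_exists[OF morse_A2])
    fix \<sigma> \<tau> assume \<sigma>: "\<sigma> \<in> C" and arrow: "(\<sigma>, \<tau>) \<in> gradient A2 f \<or> (\<tau>, \<sigma>) \<in> gradient A2 f"
    then have "\<tau> \<in> A2" unfolding in_gradient_iff by blast
    moreover have "\<tau> \<in> A1" using \<sigma> arrow noarrow gradient_mono[OF sub] by blast
    ultimately show "\<tau> \<in> C" using inter by blast
  qed
  then obtain \<phi> where morse_K: "discrete_morse capped (cone_extend a f \<phi>)"
    and crit_K: "\<And>\<sigma>. critical capped (cone_extend a f \<phi>) \<sigma> \<longleftrightarrow> critical A2 f \<sigma> \<and> \<sigma> \<notin> C \<or> \<sigma> = {a}"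
    by blast
  have crit_A2: "critical A2 f \<sigma> \<longleftrightarrow> critical M f \<sigma>" if "\<sigma> \<in> A2" "\<sigma> \<notin> C" for \<sigma>
    using critical_subcomplex_iff[OF complex_M complex_A2 sub that(1)] coface_outside_A2 that by blast
  have crit: "critical capped (cone_extend a f \<phi>) \<sigma> \<longleftrightarrow> \<sigma> \<in> A2 - C \<and> critical M f \<sigma> \<or> \<sigma> = {a}" for \<sigma>
  proof -
    have "critical A2 f \<sigma> \<Longrightarrow> \<sigma> \<in> A2" unfolding critical_def by blast
    then show ?thesis using crit_K crit_A2 by blast
  qed
  have "{a} \<in> capped" unfolding in_capped_iff by blast
  then have "crit_cells capped (cone_extend a f \<phi>) p = crit_cells M f p \<inter> (A2 - C) \<union> (if p = 0 then {{a}} else {})" for p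
    unfolding crit_cells_def cells_def crit using sub by auto
  then show thesis using that[OF morse_K] cone_extend_A by blast
qed

end

theorem theorem4p4:
  fixes M A1 A2 C :: "'a set set" and f :: "'a set \<Rightarrow> real" and a1 a2 :: 'a
  assumes M: "closed_oriented_surface M"
    and C: "simple_closed_curve C" "C \<subseteq> M"
    and A: "simplicial_complex A1" "simplicial_complex A2"
           "A1 \<union> A2 = M" "A1 \<inter> A2 = C"
    and apex: "a1 \<notin> verts M" "a2 \<notin> verts M"
    and S1: "closed_oriented_surface (A1 \<union> cone a1 C)"
    and S2: "closed_oriented_surface (A2 \<union> cone a2 C)"
    and perf: "perfect_surface_dmf M f"
    and cv: "crit_cells M f 0 \<subseteq> A1"
    and ce1: "card (crit_cells M f 1 \<inter> A1) = 2 * genus (A1 \<union> cone a1 C)"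
    and ce2: "crit_cells M f 1 - A1 \<subseteq> A2 - C"
             "card (crit_cells M f 1 - A1) = 2 * genus (A2 \<union> cone a2 C)"
    and ct: "crit_cells M f 2 \<subseteq> A2 - C"
    and noarrow: "\<forall>\<sigma>\<in>C. \<forall>\<tau>. ((\<sigma>, \<tau>) \<in> gradient M f \<or> (\<tau>, \<sigma>) \<in> gradient M f) \<longrightarrow> \<tau> \<in> A1"
  shows "\<exists>f1 f2.
     perfect_surface_dmf (A1 \<union> cone a1 C) f1 \<and>
     perfect_surface_dmf (A2 \<union> cone a2 C) f2 \<and>
     (\<forall>\<sigma>\<in>A1. f1 \<sigma> = f \<sigma>) \<and> (\<forall>\<sigma>\<in>A2. f2 \<sigma> = f \<sigma>) \<and>
     {(\<sigma>, \<tau>) \<in> gradient M f. \<sigma> \<in> A1 \<and> \<tau> \<in> A1} \<subseteq> gradient (A1 \<union> cone a1 C) f1 \<and>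
     {(\<sigma>, \<tau>) \<in> gradient M f. \<sigma> \<in> A2 \<and> \<tau> \<in> A2} \<subseteq> gradient (A2 \<union> cone a2 C) f2"
proof -
  txt \<open>\<open>S1\<close> and \<open>S2\<close> only give the genera their meaning; the construction does not use them.\<close>
  interpret separated_complex M A1 A2 C f
    using M C(1) A perf
    by unfold_locales (simp_all add: closed_oriented_surface_def perfect_surface_dmf_def)
  obtain f1 e where f1: "discrete_morse (A1 \<union> cone a1 C) f1" "\<forall>\<sigma>\<in>A1. f1 \<sigma> = f \<sigma>"
    and crit1: "\<And>p. crit_cells (A1 \<union> cone a1 C) f1 p = crit_cells M f p \<inter> A1 \<union> (if p = 2 then {insert a1 e} else {})"
    using cap_adding_critical_triangle[OF apex(1) noarrow] by blast
  obtain f2 where f2: "discrete_morse (A2 \<union> cone a2 C) f2" "\<forall>\<sigma>\<in>A2. f2 \<sigma> = f \<sigma>"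
    and crit2: "\<And>p. crit_cells (A2 \<union> cone a2 C) f2 p = crit_cells M f p \<inter> (A2 - C) \<union> (if p = 0 then {{a2}} else {})"
    using cap_adding_critical_apex[OF apex(2) noarrow] by blast
  have "crit_cells M f p \<subseteq> M" for p unfolding crit_cells_def cells_def by blast
  then have "crit_cells M f 0 \<inter> A1 = crit_cells M f 0" "crit_cells M f 2 \<inter> A1 = {}"
    "crit_cells M f 0 \<inter> (A2 - C) = {}" "crit_cells M f 1 \<inter> (A2 - C) = crit_cells M f 1 - A1"
    "crit_cells M f 2 \<inter> (A2 - C) = crit_cells M f 2"
    using cv ct ce2(1) A(3,4) by blast+
  then have "perfect_surface_dmf (A1 \<union> cone a1 C) f1" "perfect_surface_dmf (A2 \<union> cone a2 C) f2"
    using f1(1) f2(1) crit1 crit2 perf ce1 ce2(2) unfolding perfect_surface_dmf_def by simp_all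
  then show ?thesis
    using f1(2) f2(2) gradient_agree_subset[of A1 "A1 \<union> cone a1 C" f1 f]
      gradient_agree_subset[of A2 "A2 \<union> cone a2 C" f2 f] by blast
qed

end
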